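(* Let $V=\{i_1,\dots,i_m\}$ and let $\bm X$ (standard exponential margins) follow the chain geometric extremal graphical model with edges $\{i_1,i_2\},\dots,\{i_{m-1},i_m\}$, i.e. $g(\bm x)=\sum_{l=1}^{m-1}g_{\{i_l,i_{l+1}\}}(x_{i_l},x_{i_{l+1}})-\sum_{l=2}^{m-1}x_{i_l}$. Then for any $k\in\{1,\dots,m\}$, the marginal gauge $g_{V_{-k}}(\bm x_{V_{-k}})=\min_{x_{i_k}\ge0}g(\bm x)$ of $\bm X_{V_{-k}}$, $V_{-k}=V\setminus\{i_k\}$, is that of the chain geometric extremal graphical model on $V_{-k}$ with edges $E_{-k}=\{\{i_1,i_2\},\dots,\{i_{k-1},i_{k+1}\},\dots,\{i_{m-1},i_m\}\}$: $g_{V_{-k}}(\bm x_{V_{-k}})=\sum_{\{a,b\}\in E_{-k}}g_{\{a,b\}}(x_a,x_b)-\sum x_{i_l}$, where the last sum runs over the interior (non-endpoint) vertices of the chain $V_{-k}$.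
   Context: $g$ is the gauge of $\bm X$: $-\log f(t\bm x_t)/t\to g(\bm x)$ as $t\to\infty$ whenever $\bm x_t\to\bm x\in[0,\infty)^m$, $f$ the Lebesgue density; marginal gauges $g_J(\bm x_J)=\min_{x_s\ge0,\,s\notin J}g(\bm x)$ satisfy $g_J\ge\max_{j\in J}x_j$; in particular $g_{\{a,b\}}$ denotes the bivariate marginal gauge of $(X_a,X_b)$. *)

theory Defs
  imports "HOL-Analysis.Analysis"
begin

text \<open>Vectors in [0,inf)^V are modelled as functions 'v => real whose coordinates
  in V are nonnegative (coordinates outside V are irrelevant).\<close>

definition nonneg_on :: "'v set \<Rightarrow> ('v \<Rightarrow> real) \<Rightarrow> bool" where
  "nonneg_on A x \<longleftrightarrow> (\<forall>v\<in>A. 0 \<le> x v)"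

definition is_gauge :: "'v set \<Rightarrow> (('v \<Rightarrow> real) \<Rightarrow> real) \<Rightarrow> (('v \<Rightarrow> real) \<Rightarrow> real) \<Rightarrow> bool" where
  "is_gauge V f g \<longleftrightarrow>
     (\<forall>x xt. nonneg_on V x \<longrightarrow> (\<forall>v\<in>V. ((\<lambda>t. xt t v) \<longlongrightarrow> x v) at_top) \<longrightarrow>
        ((\<lambda>t::real. - ln (f (\<lambda>v. t * xt t v)) / t) \<longlongrightarrow> g x) at_top)"

text \<open>Marginal gauge g_J(x_J) = min over x_s >= 0 (s in V - J) of g(x), written as an infimum
  (the minimum, when attained, equals it).\<close>

definition marg_gauge :: "'v set \<Rightarrow> (('v \<Rightarrow> real) \<Rightarrow> real) \<Rightarrow> 'v set \<Rightarrow> ('v \<Rightarrow> real) \<Rightarrow> real" where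
  "marg_gauge V g J y = Inf {g x | x. nonneg_on V x \<and> (\<forall>j\<in>J. x j = y j)}"

text \<open>G {a,b} x depends only on (x a, x b).\<close>

definition chain_gauge :: "('v set \<Rightarrow> ('v \<Rightarrow> real) \<Rightarrow> real) \<Rightarrow> 'v list \<Rightarrow> ('v \<Rightarrow> real) \<Rightarrow> real" where
  "chain_gauge G vs x =
     (\<Sum>l<length vs - 1. G {vs ! l, vs ! Suc l} x) - (\<Sum>l\<in>{1..<length vs - 1}. x (vs ! l))"

end

theory Submission
  imports Defs
begin

text \<open>Coordinates are minimised out one at a time, and every contiguous sub-chain keeps a
  chain-form marginal gauge. Removing an endpoint a with neighbour b: x_a only enters through
  g_{a,b}(x_a, x_b), whose minimum over x_a is the exponential margin x_b, and this cancels the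
  term -x_b of b, which is no longer interior. Removing an interior vertex c between a and b:
  x_c only enters through g_{a,c} + g_{c,b} - x_c, which is the gauge of the sub-chain (a, c, b)
  minus x_b; minimising over x_c therefore yields g_{a,b}(x_a, x_b) - x_b.\<close>

text \<open>chain_sum G x ws + x (last ws) is the chain gauge along ws, and for a single vertex b it
  is the exponential margin x b; unlike chain_gauge, this offset form recurses on the head.\<close>

fun chain_sum :: "('v set \<Rightarrow> ('v \<Rightarrow> real) \<Rightarrow> real) \<Rightarrow> ('v \<Rightarrow> real) \<Rightarrow> 'v list \<Rightarrow> real" where
  "chain_sum G x (a # b # rest) = G {a, b} x - x b + chain_sum G x (b # rest)"
| "chain_sum G x _ = 0"

lemma chain_sum_eq_sum:
  "chain_sum G x ws = (\<Sum>l<length ws - 1. G {ws ! l, ws ! Suc l} x - x (ws ! Suc l))"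
proof (induction ws rule: induct_list012)
  case (3 a b zs)
  then show ?case by (simp add: sum.lessThan_Suc_shift del: sum.lessThan_Suc)
qed simp_all

lemma chain_gauge_eq_chain_sum:
  assumes "length ws \<ge> 2"
  shows "chain_gauge G ws x = chain_sum G x ws + x (last ws)"
proof -
  define n where "n = length ws - 2"
  have n: "length ws - 1 = Suc n" using assms by (simp add: n_def)
  have "(\<Sum>l<length ws - 1. x (ws ! Suc l)) = (\<Sum>l<n. x (ws ! Suc l)) + x (ws ! Suc n)"
    unfolding n by simp
  also have "(\<Sum>l<n. x (ws ! Suc l)) = (\<Sum>l\<in>{1..<length ws - 1}. x (ws ! l))"
    unfolding n by (simp only: One_nat_def sum.shift_bounds_Suc_ivl atLeast0LessThan)
  also have "ws ! Suc n = last ws"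
    using assms n by (metis last_conv_nth list.size(3) not_numeral_le_zero)
  finally show ?thesis
    by (simp add: chain_gauge_def chain_sum_eq_sum sum_subtractf)
qed

lemma chain_sum_append:
  "chain_sum G x (p @ a # rest) = chain_sum G x (p @ [a]) + chain_sum G x (a # rest)"
  by (induction p rule: induct_list012) simp_all

lemma chain_sum_snoc:
  "ws \<noteq> [] \<Longrightarrow> chain_sum G x (ws @ [b]) = chain_sum G x ws + G {last ws, b} x - x b"
  by (induction ws rule: induct_list012) simp_all

lemma chain_sum_cong:
  assumes local: "\<And>e x x'. (\<forall>v\<in>e. x v = x' v) \<Longrightarrow> G e x = G e x'"
    and eq: "\<forall>v\<in>set ws. x v = x' v"
  shows "chain_sum G x ws = chain_sum G x' ws"
  using eq
proof (induction ws rule: induct_list012)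
  case (3 a b zs)
  have "G {a, b} x = G {a, b} x'" by (rule local) (use 3 in auto)
  with 3 show ?case by simp
qed simp_all

lemma marg_gauge_cong:
  "\<forall>j\<in>J. x j = x' j \<Longrightarrow> marg_gauge V g J x = marg_gauge V g J x'"
  unfolding marg_gauge_def by metis

lemma nonneg_extension_exists:
  "\<forall>v\<in>J. 0 \<le> y v \<Longrightarrow> \<exists>x. nonneg_on V x \<and> (\<forall>j\<in>J. x j = y j)"
  by (rule exI[of _ "\<lambda>v. if v \<in> J then y v else 0"]) (auto simp: nonneg_on_def)

lemma marg_gauge_nonneg:
  assumes g_nonneg: "\<And>x. nonneg_on V x \<Longrightarrow> 0 \<le> g x" and y: "\<forall>v\<in>J. 0 \<le> y v"
  shows "0 \<le> marg_gauge V g J y"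
  unfolding marg_gauge_def
  using nonneg_extension_exists[OF y] by (auto intro!: cInf_greatest g_nonneg)

lemma marg_gauge_Diff_eq_INF:
  assumes g_nonneg: "\<And>x. nonneg_on V x \<Longrightarrow> 0 \<le> g x"
    and c: "c \<in> V" and y: "\<forall>v\<in>J - {c}. 0 \<le> y v"
  shows "marg_gauge V g (J - {c}) y = (INF z\<in>{0..}. marg_gauge V g J (y(c := z)))"
proof -
  define A where "A = {g x |x. nonneg_on V x \<and> (\<forall>j\<in>J - {c}. x j = y j)}"
  have A_ne: "A \<noteq> {}" using nonneg_extension_exists[OF y] unfolding A_def by blast
  have A_bdd: "bdd_below A" unfolding A_def by (auto intro!: bdd_belowI[of _ 0] g_nonneg)
  have yz: "\<forall>v\<in>J. 0 \<le> (y(c := z)) v" if "0 \<le> z" for z using y that by auto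
  have INF_bdd: "bdd_below ((\<lambda>z. marg_gauge V g J (y(c := z))) ` {0..})"
    by (rule bdd_belowI2[of _ 0], rule marg_gauge_nonneg[OF g_nonneg yz]) auto
  show ?thesis
    unfolding marg_gauge_def[of V g "J - {c}"] A_def[symmetric]
  proof (rule antisym)
    show "Inf A \<le> (INF z\<in>{0..}. marg_gauge V g J (y(c := z)))"
      unfolding marg_gauge_def
      using nonneg_extension_exists[OF yz]
      by (intro cINF_greatest cInf_superset_mono[OF _ A_bdd]) (auto simp: A_def)
    show "(INF z\<in>{0..}. marg_gauge V g J (y(c := z))) \<le> Inf A"
    proof (rule cInf_greatest[OF A_ne])
      fix t assume "t \<in> A"
      then obtain x where x: "t = g x" "nonneg_on V x" "\<forall>j\<in>J - {c}. x j = y j"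
        unfolding A_def by auto
      have "0 \<le> x c" using x(2) c unfolding nonneg_on_def by blast
      then have "(INF z\<in>{0..}. marg_gauge V g J (y(c := z))) \<le> marg_gauge V g J (y(c := x c))"
        by (intro cINF_lower[OF INF_bdd]) simp
      also have "\<dots> \<le> g x"
        unfolding marg_gauge_def
        using x by (intro cInf_lower) (auto intro!: bdd_belowI[of _ 0] g_nonneg)
      finally show "(INF z\<in>{0..}. marg_gauge V g J (y(c := z))) \<le> t" using x(1) by simp
    qed
  qed
qed

lemma marg_gauge_Diff_add:
  assumes g_nonneg: "\<And>x. nonneg_on V x \<Longrightarrow> 0 \<le> g x"
    and c: "c \<in> V" and K: "K \<subseteq> J" and y: "\<forall>v\<in>J - {c}. 0 \<le> y v"
    and split: "\<And>z. 0 \<le> z \<Longrightarrow> marg_gauge V g J (y(c := z)) = C + marg_gauge V g K (y(c := z))"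
  shows "marg_gauge V g (J - {c}) y = C + marg_gauge V g (K - {c}) y"
proof -
  have yK: "\<forall>v\<in>K - {c}. 0 \<le> y v" using y K by blast
  have bdd: "bdd_below ((\<lambda>z. marg_gauge V g K (y(c := z))) ` {0..})"
    using yK by (auto intro!: bdd_belowI2[of _ 0] marg_gauge_nonneg[OF g_nonneg])
  have "marg_gauge V g (J - {c}) y = (INF z\<in>{0..}. C + marg_gauge V g K (y(c := z)))"
    using marg_gauge_Diff_eq_INF[OF g_nonneg c y] split by simp
  also have "\<dots> = C + (INF z\<in>{0..}. marg_gauge V g K (y(c := z)))"
    using bdd by (simp add: Inf_add_eq)
  also have "\<dots> = C + marg_gauge V g (K - {c}) y"
    using marg_gauge_Diff_eq_INF[OF g_nonneg c yK] by simp
  finally show ?thesis .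
qed

locale chain_model =
  fixes vs :: "'v list" and g :: "('v \<Rightarrow> real) \<Rightarrow> real"
  assumes distinct_vs: "distinct vs"
    and length_vs: "length vs \<ge> 2"
    and exp_margins: "\<forall>j\<in>set vs. \<forall>y. 0 \<le> y j \<longrightarrow> marg_gauge (set vs) g {j} y = y j"
    and g_ge: "\<forall>x. nonneg_on (set vs) x \<longrightarrow> (\<forall>j\<in>set vs. x j \<le> g x)"
    and g_chain: "\<forall>x. nonneg_on (set vs) x \<longrightarrow> g x = chain_gauge (marg_gauge (set vs) g) vs x"
begin

abbreviation M :: "'v set \<Rightarrow> ('v \<Rightarrow> real) \<Rightarrow> real" where
  "M \<equiv> marg_gauge (set vs) g"

lemma g_nonneg: "nonneg_on (set vs) x \<Longrightarrow> 0 \<le> g x"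
proof -
  assume x: "nonneg_on (set vs) x"
  have "hd vs \<in> set vs" using length_vs by (cases vs) auto
  then show ?thesis using x g_ge unfolding nonneg_on_def by (meson order_trans)
qed

lemma M_Diff_add:
  assumes "c \<in> set vs" "K \<subseteq> J" "\<forall>v\<in>J - {c}. 0 \<le> y v"
    and "\<And>z. 0 \<le> z \<Longrightarrow> M J (y(c := z)) = C + M K (y(c := z))"
  shows "M (J - {c}) y = C + M (K - {c}) y"
  using marg_gauge_Diff_add[OF g_nonneg assms] .

lemma chain_sum_M_cong: "\<forall>v\<in>set ws. x v = x' v \<Longrightarrow> chain_sum M x ws = chain_sum M x' ws"
  by (rule chain_sum_cong) (simp_all add: marg_gauge_cong)

definition chain_marginal :: "'v list \<Rightarrow> bool" where
  "chain_marginal ws \<longleftrightarrow>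
     (\<forall>y. (\<forall>v\<in>set ws. 0 \<le> y v) \<longrightarrow> M (set ws) y = chain_sum M y ws + y (last ws))"

lemma chain_marginal_vs: "chain_marginal vs"
  unfolding chain_marginal_def
proof (intro allI impI)
  fix y :: "'v \<Rightarrow> real" assume y: "\<forall>v\<in>set vs. 0 \<le> y v"
  have g_eq: "g x = chain_sum M y vs + y (last vs)"
    if "nonneg_on (set vs) x" "\<forall>j\<in>set vs. x j = y j" for x
  proof -
    have "last vs \<in> set vs" using length_vs by (intro last_in_set) auto
    then show ?thesis
      using that g_chain chain_gauge_eq_chain_sum[OF length_vs] chain_sum_M_cong[of vs x y] by simp
  qed
  obtain x0 where x0: "nonneg_on (set vs) x0" "\<forall>j\<in>set vs. x0 j = y j"
    using nonneg_extension_exists[OF y] by blast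
  have "{g x |x. nonneg_on (set vs) x \<and> (\<forall>j\<in>set vs. x j = y j)} = {chain_sum M y vs + y (last vs)}"
    using x0 by (auto simp: g_eq intro!: exI[of _ x0])
  then show "M (set vs) y = chain_sum M y vs + y (last vs)"
    unfolding marg_gauge_def by simp
qed

lemma chain_marginal_tl:
  assumes "chain_marginal (a # ws)" "distinct (a # ws)" "set (a # ws) \<subseteq> set vs" "ws \<noteq> []"
  shows "chain_marginal ws"
  unfolding chain_marginal_def
proof (intro allI impI)
  fix y :: "'v \<Rightarrow> real" assume y: "\<forall>v\<in>set ws. 0 \<le> y v"
  obtain b rest where ws: "ws = b # rest" using assms(4) by (cases ws) auto
  have a: "a \<notin> set ws" "last ws \<noteq> a" "a \<in> set vs" "b \<in> set vs"
    using assms(2-4) ws last_in_set[of ws] by auto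
  define C where "C = chain_sum M y ws + y (last ws) - y b"
  have "M (set (a # ws) - {a}) y = C + M ({a, b} - {a}) y"
  proof (rule M_Diff_add)
    fix z :: real assume "0 \<le> z"
    then have "M (set (a # ws)) (y(a := z)) = chain_sum M (y(a := z)) (a # ws) + y (last ws)"
      using assms(1,4) a y unfolding chain_marginal_def by simp
    also have "chain_sum M (y(a := z)) (a # ws)
        = M {a, b} (y(a := z)) - y b + chain_sum M (y(a := z)) ws"
      using a ws by auto
    also have "chain_sum M (y(a := z)) ws = chain_sum M y ws"
      using a by (intro chain_sum_M_cong) auto
    finally show "M (set (a # ws)) (y(a := z)) = C + M {a, b} (y(a := z))"
      unfolding C_def by linarith
  qed (use a y ws in auto)
  moreover have "set (a # ws) - {a} = set ws" "{a, b} - {a} = {b}" using a ws by auto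
  moreover have "M {b} y = y b" using exp_margins a y ws by simp
  ultimately show "M (set ws) y = chain_sum M y ws + y (last ws)" unfolding C_def by simp
qed

lemma chain_marginal_butlast:
  assumes "chain_marginal (ws @ [b])" "distinct (ws @ [b])" "set (ws @ [b]) \<subseteq> set vs" "ws \<noteq> []"
  shows "chain_marginal ws"
  unfolding chain_marginal_def
proof (intro allI impI)
  fix y :: "'v \<Rightarrow> real" assume y: "\<forall>v\<in>set ws. 0 \<le> y v"
  define a where "a = last ws"
  have b: "b \<notin> set ws" "a \<in> set ws" "a \<in> set vs" "b \<in> set vs"
    using assms(2-4) unfolding a_def by auto
  have "M (set (ws @ [b]) - {b}) y = chain_sum M y ws + M ({a, b} - {b}) y"
  proof (rule M_Diff_add)
    fix z :: real assume "0 \<le> z"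
    then have "M (set (ws @ [b])) (y(b := z)) = chain_sum M (y(b := z)) (ws @ [b]) + z"
      using assms(1) b y unfolding chain_marginal_def by simp
    also have "chain_sum M (y(b := z)) (ws @ [b])
        = chain_sum M (y(b := z)) ws + M {a, b} (y(b := z)) - z"
      using assms(4) unfolding a_def by (simp add: chain_sum_snoc)
    also have "chain_sum M (y(b := z)) ws = chain_sum M y ws"
      using b by (intro chain_sum_M_cong) auto
    finally show "M (set (ws @ [b])) (y(b := z)) = chain_sum M y ws + M {a, b} (y(b := z))"
      by linarith
  qed (use b y in auto)
  moreover have "set (ws @ [b]) - {b} = set ws" "{a, b} - {b} = {a}" using b by auto
  moreover have "M {a} y = y a" using exp_margins b y by simp
  ultimately show "M (set ws) y = chain_sum M y ws + y (last ws)" unfolding a_def by simp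
qed

lemma chain_marginal_suffix:
  "chain_marginal (p @ ws) \<Longrightarrow> distinct (p @ ws) \<Longrightarrow> set (p @ ws) \<subseteq> set vs \<Longrightarrow> ws \<noteq> []
    \<Longrightarrow> chain_marginal ws"
proof (induction p)
  case (Cons a p)
  then show ?case using chain_marginal_tl[of a "p @ ws"] by simp
qed simp

lemma chain_marginal_prefix:
  "chain_marginal (ws @ q) \<Longrightarrow> distinct (ws @ q) \<Longrightarrow> set (ws @ q) \<subseteq> set vs \<Longrightarrow> ws \<noteq> []
    \<Longrightarrow> chain_marginal ws"
proof (induction q rule: rev_induct)
  case (snoc b q)
  then show ?case using chain_marginal_butlast[of "ws @ q" b] by simp
qed simp

lemma chain_marginal_infix:
  assumes "vs = p @ ws @ q" "ws \<noteq> []"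
  shows "chain_marginal ws"
  using assms chain_marginal_vs distinct_vs
  by (intro chain_marginal_prefix[of ws q] chain_marginal_suffix[of p "ws @ q"]) auto

lemma chain_marginal_remove_interior:
  assumes vs: "vs = p @ [a, c, b] @ q"
  shows "chain_marginal (p @ [a, b] @ q)"
  unfolding chain_marginal_def
proof (intro allI impI)
  fix y :: "'v \<Rightarrow> real" assume y: "\<forall>v\<in>set (p @ [a, b] @ q). 0 \<le> y v"
  have c: "c \<notin> set p" "c \<notin> set q" "c \<noteq> a" "c \<noteq> b" "c \<in> set vs"
    using distinct_vs vs by auto
  define S where "S = chain_sum M y (p @ [a]) + chain_sum M y (b # q) + y (last (b # q))"
  have "M (set vs - {c}) y = (S - y b) + M ({a, c, b} - {c}) y"
  proof (rule M_Diff_add)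
    fix z :: real assume "0 \<le> z"
    define w where "w = y(c := z)"
    have w_nonneg: "\<forall>v\<in>set vs. 0 \<le> w v" using y vs \<open>0 \<le> z\<close> unfolding w_def by auto
    have w_last: "w (last (b # q)) = y (last (b # q))"
      using c last_in_set[of "b # q"] unfolding w_def by auto
    have "chain_sum M w vs
        = chain_sum M w (p @ [a]) + chain_sum M w [a, c, b] + chain_sum M w (b # q)"
      using vs chain_sum_append[of M w p a "c # b # q"] chain_sum_append[of M w "[a, c]" b q] by simp
    also have "chain_sum M w (p @ [a]) = chain_sum M y (p @ [a])"
      using c unfolding w_def by (intro chain_sum_M_cong) auto
    also have "chain_sum M w (b # q) = chain_sum M y (b # q)"
      using c unfolding w_def by (intro chain_sum_M_cong) auto
    finally have "M (set vs) w
        = chain_sum M y (p @ [a]) + chain_sum M w [a, c, b] + chain_sum M y (b # q) + y (last (b # q))"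
      using chain_marginal_vs w_nonneg w_last vs unfolding chain_marginal_def by simp
    moreover have "M {a, c, b} w = chain_sum M w [a, c, b] + y b"
      using chain_marginal_infix[OF vs] w_nonneg vs c unfolding chain_marginal_def w_def by simp
    ultimately show "M (set vs) w = (S - y b) + M {a, c, b} w"
      unfolding S_def by linarith
  qed (use c vs y in auto)
  moreover have "set vs - {c} = set (p @ [a, b] @ q)" "{a, c, b} - {c} = {a, b}"
    using distinct_vs vs by auto
  moreover have "chain_sum M y (p @ [a, b] @ q)
      = chain_sum M y (p @ [a]) + (M {a, b} y - y b) + chain_sum M y (b # q)"
    using chain_sum_append[of M y p a "b # q"] by simp
  ultimately show "M (set (p @ [a, b] @ q)) y
      = chain_sum M y (p @ [a, b] @ q) + y (last (p @ [a, b] @ q))"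
    unfolding S_def by simp
qed

lemma chain_marginal_remove_nth:
  assumes k: "k < length vs"
  shows "chain_marginal (take k vs @ drop (Suc k) vs)"
proof -
  have vs_ne: "vs \<noteq> []" and tl_ne: "tl vs \<noteq> []" and butlast_ne: "butlast vs \<noteq> []"
    using length_vs by (auto simp: tl_def butlast_conv_take split: list.split)
  consider "k = 0" | "k = length vs - 1" | "0 < k" "k < length vs - 1" using k by linarith
  then show ?thesis
  proof cases
    case 1
    then show ?thesis
      using chain_marginal_tl[of "hd vs" "tl vs"] chain_marginal_vs distinct_vs vs_ne tl_ne
      by (simp add: drop_Suc del: drop_Suc_Cons)
  next
    case 2
    then have "take k vs @ drop (Suc k) vs = butlast vs" by (simp add: butlast_conv_take)
    then show ?thesis
      using chain_marginal_butlast[of "butlast vs" "last vs"] chain_marginal_vs distinct_vs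
        vs_ne butlast_ne by simp
  next
    case 3
    have take: "take k vs = take (k - 1) vs @ [vs ! (k - 1)]"
      using 3 k by (metis Suc_pred' less_imp_diff_less take_Suc_conv_app_nth)
    have drop: "drop (Suc k) vs = vs ! Suc k # drop (Suc (Suc k)) vs"
      using 3 by (simp add: Cons_nth_drop_Suc)
    have "vs = take (k - 1) vs @ [vs ! (k - 1), vs ! k, vs ! Suc k] @ drop (Suc (Suc k)) vs"
      using id_take_nth_drop[OF k] take drop by simp
    from chain_marginal_remove_interior[OF this] show ?thesis
      using take drop by simp
  qed
qed

end

theorem lemma3:
  fixes vs :: "'v list" and k :: nat
    and f g :: "('v \<Rightarrow> real) \<Rightarrow> real"
  assumes dist: "distinct vs"
    and len: "length vs \<ge> 3"
    and k: "k < length vs"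
    and gauge: "is_gauge (set vs) f g"
    and dens_nonneg: "\<forall>x. 0 \<le> f x"
    and exp_margins: "\<forall>j\<in>set vs. \<forall>y. 0 \<le> y j \<longrightarrow> marg_gauge (set vs) g {j} y = y j"
    and g_ge: "\<forall>x. nonneg_on (set vs) x \<longrightarrow> (\<forall>j\<in>set vs. x j \<le> g x)"
    and chain: "\<forall>x. nonneg_on (set vs) x \<longrightarrow> g x = chain_gauge (marg_gauge (set vs) g) vs x"
  shows "\<forall>y. nonneg_on (set (take k vs @ drop (Suc k) vs)) y \<longrightarrow>
           marg_gauge (set vs) g (set (take k vs @ drop (Suc k) vs)) y =
           chain_gauge (marg_gauge (set vs) g) (take k vs @ drop (Suc k) vs) y"
proof -
  interpret chain_model vs g
    using dist len exp_margins g_ge chain by unfold_locales auto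
  define r where "r = take k vs @ drop (Suc k) vs"
  have "length r \<ge> 2" using len k unfolding r_def by simp
  then have "chain_gauge M r y = chain_sum M y r + y (last r)" for y
    by (rule chain_gauge_eq_chain_sum)
  moreover have "chain_marginal r" unfolding r_def using k by (rule chain_marginal_remove_nth)
  ultimately show ?thesis
    unfolding r_def[symmetric] chain_marginal_def nonneg_on_def by auto
qed

end
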